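(* Let $\mathsf{B}$ be Berwald's metric on $\mathbb{B}^n_1(\mathbf{0})$, $$\mathsf{B}(x,y)=\frac{\big(\sqrt{(1-|x|^2)|y|^2+\langle x,y\rangle^2}+\langle x,y\rangle\big)^2}{(1-|x|^2)^2\sqrt{(1-|x|^2)|y|^2+\langle x,y\rangle^2}},$$ and let $\mathsf{B}^*=\mathsf{B}^*(x,\xi)$ be its co-metric. Set $a^{ij}=(1-|x|^2)^3(\delta^{ij}-x^ix^j)$, $b^i=(1-|x|^2)^2x^i$, $\alpha^{*2}=a^{ij}\xi_i\xi_j$ and $\beta^*=b^i\xi_i$. Then $\mathsf{B}^*$ satisfies $$\begin{aligned}&16|x|^2(1-|x|^2)^2\big\{(1-|x|^2)\alpha^{*2}+\beta^{*2}\big\}\mathsf{B}^{*4}+8\big\{(10|x|^2-1)(1-|x|^2)\alpha^{*2}\beta^*+(9|x|^2-1)\beta^{*3}\big\}\mathsf{B}^{*3}\\&+\big\{(1-20|x|^2-8|x|^4)\alpha^{*4}+6(6|x|^2-5)\alpha^{*2}\beta^{*2}-27\beta^{*4}\big\}\mathsf{B}^{*2}+12\alpha^{*4}\beta^*\mathsf{B}^*-\alpha^{*6}=0.\end{aligned}$$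
   Context: The co-metric of a Finsler metric $F$ is $F^*(x,\xi)=\sup_{y\in T_xM\setminus\{0\}}\xi(y)/F(x,y)$ for $\xi=\xi_idx^i\in T^*_xM$. *)

theory Defs
  imports "HOL-Analysis.Analysis"
begin

definition berwald :: "real^'n \<Rightarrow> real^'n \<Rightarrow> real" where
  "berwald x y =
     (let r = sqrt ((1 - (norm x)\<^sup>2) * (norm y)\<^sup>2 + (x \<bullet> y)\<^sup>2)
      in (r + x \<bullet> y)\<^sup>2 / ((1 - (norm x)\<^sup>2)\<^sup>2 * r))"

text \<open>Co-metric: F*(x,xi) = sup over nonzero y of xi(y)/F(x,y). A covector xi = xi_i dx^i
  is represented by its coefficient vector, so xi(y) = xi \<bullet> y.\<close>
definition co_metric :: "(real^'n \<Rightarrow> real^'n \<Rightarrow> real) \<Rightarrow> real^'n \<Rightarrow> real^'n \<Rightarrow> real" where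
  "co_metric F x \<xi> = (SUP y \<in> UNIV - {0}. (\<xi> \<bullet> y) / F x y)"

definition berwald_a :: "real^'n \<Rightarrow> 'n \<Rightarrow> 'n \<Rightarrow> real" where
  "berwald_a x i j = (1 - (norm x)\<^sup>2)^3 * ((if i = j then 1 else 0) - x$i * x$j)"

definition berwald_b :: "real^'n \<Rightarrow> 'n \<Rightarrow> real" where
  "berwald_b x i = (1 - (norm x)\<^sup>2)^2 * x$i"

definition alpha_star_sq :: "real^'n \<Rightarrow> real^'n \<Rightarrow> real" where
  "alpha_star_sq x \<xi> = (\<Sum>i\<in>UNIV. \<Sum>j\<in>UNIV. berwald_a x i j * \<xi>$i * \<xi>$j)"

definition beta_star :: "real^'n \<Rightarrow> real^'n \<Rightarrow> real" where
  "beta_star x \<xi> = (\<Sum>i\<in>UNIV. berwald_b x i * \<xi>$i)"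

end

theory Submission
  imports Defs
begin

text \<open>By positive homogeneity the supremum defining \<open>B\<^sup>*(x,\<xi>)\<close> is attained at a unit
  vector \<open>y\<close>, and since \<open>v \<mapsto> B\<^sup>*(x,\<xi>) B(x,v) - \<xi>(v)\<close> is nonnegative and vanishes
  at \<open>y\<close>, Fermat's rule gives \<open>\<xi> = B\<^sup>* \<nabla>\<^sub>yB(x,y)\<close>. Writing \<open>p = \<langle>x,y\<rangle>\<close>,
  \<open>c = 1 - |x|\<^sup>2\<close> and \<open>r = \<surd>(c + p\<^sup>2)\<close>, the gradient is a multiple of
  \<open>(r - p) c y + ((r - p) p + 2 r\<^sup>2) x\<close>. Hence \<open>\<alpha>\<^sup>*\<^sup>2\<close>, \<open>\<beta>\<^sup>*\<close> and \<open>B\<^sup>*\<close> are, up to a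
  common weighted rescaling, polynomials in \<open>r\<close> and \<open>p\<close> alone (with \<open>|x|\<^sup>2 = 1 - r\<^sup>2 + p\<^sup>2\<close>),
  and the equation becomes a polynomial identity in \<open>r\<close> and \<open>p\<close>.\<close>

lemma co_metric_attained:
  fixes F :: "real^'n \<Rightarrow> real^'n \<Rightarrow> real"
  assumes pos: "\<And>y. y \<noteq> 0 \<Longrightarrow> F x y > 0"
    and homogeneous: "\<And>t y. t > 0 \<Longrightarrow> F x (t *\<^sub>R y) = t * F x y"
    and cont: "continuous_on (sphere 0 1) (F x)"
  obtains y0 where "norm y0 = 1" and "\<xi> \<bullet> y0 = co_metric F x \<xi> * F x y0"
    and "\<And>y. y \<noteq> 0 \<Longrightarrow> \<xi> \<bullet> y \<le> co_metric F x \<xi> * F x y"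
proof -
  define g where "g y = (\<xi> \<bullet> y) / F x y" for y
  have "continuous_on (sphere 0 1) g"
    unfolding g_def
    by (intro continuous_intros cont) (metis mem_sphere_0 norm_zero zero_neq_one less_irrefl pos)
  moreover have "sphere (0::real^'n) 1 \<noteq> {}"
    by (simp add: sphere_eq_empty)
  ultimately obtain y0 where y0: "norm y0 = 1" and max: "\<And>y. norm y = 1 \<Longrightarrow> g y \<le> g y0"
    using continuous_attains_sup[of "sphere 0 1" g] by auto
  have le: "g y \<le> g y0" if "y \<noteq> 0" for y
  proof -
    have "g y = g (inverse (norm y) *\<^sub>R y)"
      using that pos by (simp add: g_def homogeneous)
    also have "\<dots> \<le> g y0"
      using that by (intro max) simp
    finally show ?thesis .
  qed
  have sup: "co_metric F x \<xi> = g y0"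
    unfolding co_metric_def g_def[symmetric]
  proof (rule antisym)
    show "(SUP y\<in>UNIV - {0}. g y) \<le> g y0"
      using le by (intro cSUP_least) auto
    show "g y0 \<le> (SUP y\<in>UNIV - {0}. g y)"
      using y0 le by (intro cSUP_upper bdd_aboveI2) auto
  qed
  have ratio: "\<xi> \<bullet> y = g y * F x y" if "y \<noteq> 0" for y
    using pos[OF that] by (simp add: g_def)
  show ?thesis
  proof (rule that[OF y0])
    show "\<xi> \<bullet> y0 = co_metric F x \<xi> * F x y0"
      using ratio[of y0] y0 sup by fastforce
    show "\<xi> \<bullet> y \<le> co_metric F x \<xi> * F x y" if "y \<noteq> 0" for y
      using ratio[OF that] le[OF that] pos[OF that] sup by (simp add: mult_right_mono)
  qed
qed

lemma co_metric_eq_scaled_gradient: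
  fixes F :: "real^'n \<Rightarrow> real^'n \<Rightarrow> real" and grad :: "real^'n \<Rightarrow> real^'n"
  assumes pos: "\<And>y. y \<noteq> 0 \<Longrightarrow> F x y > 0"
    and homogeneous: "\<And>t y. t > 0 \<Longrightarrow> F x (t *\<^sub>R y) = t * F x y"
    and deriv: "\<And>y. y \<noteq> 0 \<Longrightarrow> (F x has_derivative (\<lambda>v. grad y \<bullet> v)) (at y)"
  obtains y0 where "norm y0 = 1" and "\<xi> = co_metric F x \<xi> *\<^sub>R grad y0"
proof -
  define B where "B = co_metric F x \<xi>"
  have "continuous_on (sphere 0 1) (F x)"
    using deriv by (metis continuous_at_imp_continuous_on has_derivative_continuous norm_zero
        mem_sphere_0 zero_neq_one)
  then obtain y0 where y0: "norm y0 = 1" and eq: "\<xi> \<bullet> y0 = B * F x y0"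
    and le: "\<And>y. y \<noteq> 0 \<Longrightarrow> \<xi> \<bullet> y \<le> B * F x y"
    using co_metric_attained[of F x, OF pos homogeneous] unfolding B_def by metis
  define \<phi> where "\<phi> y = B * F x y - \<xi> \<bullet> y" for y
  have "(\<lambda>v. B * (grad y0 \<bullet> v) - \<xi> \<bullet> v) = (\<lambda>v. 0)"
  proof (rule differential_zero_maxmin[where f = \<phi> and S = "- {0}"])
    show "y0 \<in> - {0}" using y0 by auto
    show "(\<phi> has_derivative (\<lambda>v. B * (grad y0 \<bullet> v) - \<xi> \<bullet> v)) (at y0)"
      unfolding \<phi>_def using y0 by (auto intro!: derivative_eq_intros deriv)
    show "(\<forall>y\<in>- {0}. \<phi> y \<le> \<phi> y0) \<or> (\<forall>y\<in>- {0}. \<phi> y0 \<le> \<phi> y)"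
      using eq le by (auto simp: \<phi>_def)
  qed auto
  then have "(B *\<^sub>R grad y0 - \<xi>) \<bullet> v = 0" for v
    by (metis inner_diff_left inner_scaleR_left)
  then have "\<xi> = B *\<^sub>R grad y0"
    by (metis eq_iff_diff_eq_0 inner_eq_zero_iff)
  with y0 show ?thesis
    using that unfolding B_def by blast
qed

lemma berwald_radical_gt_abs_inner:
  fixes x y :: "real^'n"
  assumes "norm x < 1" "y \<noteq> 0"
  shows "sqrt ((1 - (norm x)\<^sup>2) * (norm y)\<^sup>2 + (x \<bullet> y)\<^sup>2) > \<bar>x \<bullet> y\<bar>"
proof -
  have "(1 - (norm x)\<^sup>2) * (norm y)\<^sup>2 > 0"
    using assms by (simp add: abs_square_less_1)
  then show ?thesis
    by (simp add: real_less_rsqrt)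
qed

lemma berwald_pos:
  fixes x y :: "real^'n"
  assumes "norm x < 1" "y \<noteq> 0"
  shows "berwald x y > 0"
proof -
  let ?r = "sqrt ((1 - (norm x)\<^sup>2) * (norm y)\<^sup>2 + (x \<bullet> y)\<^sup>2)"
  have "?r > \<bar>x \<bullet> y\<bar>"
    using berwald_radical_gt_abs_inner[OF assms] .
  then have "?r > 0" "?r + x \<bullet> y \<noteq> 0"
    by linarith+
  moreover have "1 - (norm x)\<^sup>2 > 0"
    using assms(1) by (simp add: abs_square_less_1)
  ultimately show ?thesis
    unfolding berwald_def Let_def by (simp add: zero_less_divide_iff)
qed

lemma berwald_pos_homogeneous:
  fixes x y :: "real^'n"
  assumes "t > 0"
  shows "berwald x (t *\<^sub>R y) = t * berwald x y"
proof -
  have "(1 - (norm x)\<^sup>2) * (norm (t *\<^sub>R y))\<^sup>2 + (x \<bullet> (t *\<^sub>R y))\<^sup>2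
      = t\<^sup>2 * ((1 - (norm x)\<^sup>2) * (norm y)\<^sup>2 + (x \<bullet> y)\<^sup>2)"
    by (simp add: power_mult_distrib algebra_simps)
  then have "sqrt ((1 - (norm x)\<^sup>2) * (norm (t *\<^sub>R y))\<^sup>2 + (x \<bullet> (t *\<^sub>R y))\<^sup>2)
      = t * sqrt ((1 - (norm x)\<^sup>2) * (norm y)\<^sup>2 + (x \<bullet> y)\<^sup>2)"
    using assms by (simp add: real_sqrt_mult)
  moreover have "(t * a + t * b)\<^sup>2 / (k * (t * a)) = t * ((a + b)\<^sup>2 / (k * a))" for a b k :: real
    using assms by (cases "k * a = 0") (auto simp: field_simps power2_eq_square)
  ultimately show ?thesis
    by (simp add: berwald_def Let_def)
qed

definition berwald_grad :: "real^'n \<Rightarrow> real^'n \<Rightarrow> real^'n" where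
  "berwald_grad x y =
     (let c = 1 - (norm x)\<^sup>2; p = x \<bullet> y; r = sqrt (c * (norm y)\<^sup>2 + p\<^sup>2)
      in ((r + p) / (c\<^sup>2 * r^3)) *\<^sub>R (((r - p) * c) *\<^sub>R y + ((r - p) * p + 2 * r\<^sup>2) *\<^sub>R x))"

lemma berwald_has_derivative:
  fixes x y :: "real^'n"
  assumes "norm x < 1" "y \<noteq> 0"
  shows "(berwald x has_derivative (\<lambda>v. berwald_grad x y \<bullet> v)) (at y)"
proof -
  define c where "c = 1 - (norm x)\<^sup>2"
  define R where "R y = c * (y \<bullet> y) + (x \<bullet> y)\<^sup>2" for y
  define p where "p = x \<bullet> y"
  define r where "r = sqrt (R y)"
  have c: "c > 0"
    using assms(1) by (simp add: c_def abs_square_less_1)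
  have "r > \<bar>p\<bar>"
    using berwald_radical_gt_abs_inner[OF assms]
    by (simp add: r_def R_def p_def c_def power2_norm_eq_inner)
  then have r: "r > 0"
    by linarith
  then have R: "R y > 0"
    by (simp add: r_def)
  have eq: "berwald x = (\<lambda>y. (sqrt (R y) + x \<bullet> y)\<^sup>2 / (c\<^sup>2 * sqrt (R y)))"
    by (auto simp: berwald_def c_def R_def power2_norm_eq_inner fun_eq_iff Let_def)
  have grad: "berwald_grad x y
      = ((r + p) / (c\<^sup>2 * r^3)) *\<^sub>R (((r - p) * c) *\<^sub>R y + ((r - p) * p + 2 * r\<^sup>2) *\<^sub>R x)"
    by (simp add: berwald_grad_def Let_def r_def R_def p_def c_def power2_norm_eq_inner)
  have dR: "(R has_derivative (\<lambda>v. 2 * (c * (y \<bullet> v) + p * (x \<bullet> v)))) (at y)"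
    unfolding R_def p_def by (auto intro!: derivative_eq_intros simp: inner_commute algebra_simps)
  have den: "c\<^sup>2 * sqrt (R y) \<noteq> 0"
    using c R by simp
  show ?thesis
    unfolding eq
    apply (rule derivative_eq_intros dR R den refl)+
    unfolding grad fun_eq_iff r_def[symmetric] p_def[symmetric] inner_scaleR_left inner_add_left
    using r c by (simp add: field_simps power2_eq_square power3_eq_cube)
qed

lemma berwald_grad_unit:
  fixes x y :: "real^'n" and c p r :: real
  assumes "norm x < 1" "norm y = 1"
    and c: "c = 1 - (norm x)\<^sup>2" and p: "p = x \<bullet> y" and r: "r = sqrt (c + p\<^sup>2)"
  shows "berwald_grad x y
    = inverse ((r - p) * c * r^3) *\<^sub>R (((r - p) * c) *\<^sub>R y + ((r - p) * p + 2 * r\<^sup>2) *\<^sub>R x)"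
proof -
  have "y \<noteq> 0"
    using assms(2) by auto
  have "r > \<bar>p\<bar>"
    using berwald_radical_gt_abs_inner[OF assms(1) \<open>y \<noteq> 0\<close>] assms by auto
  then have "r + p \<noteq> 0" "r > 0"
    by linarith+
  then have "r\<^sup>2 = c + p\<^sup>2"
    by (simp add: r)
  then have "c\<^sup>2 * r^3 = (r + p) * ((r - p) * c * r^3)"
    by algebra
  with \<open>r + p \<noteq> 0\<close> have "(r + p) / (c\<^sup>2 * r^3) = inverse ((r - p) * c * r^3)"
    by (simp only: nonzero_divide_mult_cancel_left inverse_eq_divide not_False_eq_True)
  then show ?thesis
    using assms by (simp add: berwald_grad_def Let_def)
qed

lemma alpha_star_sq_eq:
  "alpha_star_sq x \<xi> = (1 - (norm x)\<^sup>2)^3 * (\<xi> \<bullet> \<xi> - (x \<bullet> \<xi>)\<^sup>2)"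
proof -
  define k where "k = (1 - (norm x)\<^sup>2)^3"
  have "berwald_a x i j * \<xi>$i * \<xi>$j
      = (if i = j then k * (\<xi>$i * \<xi>$j) else 0) - (k * (x$i * \<xi>$i)) * (x$j * \<xi>$j)" for i j
    by (simp add: berwald_a_def k_def algebra_simps)
  then have "alpha_star_sq x \<xi>
      = (\<Sum>i\<in>UNIV. k * (\<xi>$i * \<xi>$i)) - (\<Sum>i\<in>UNIV. k * (x$i * \<xi>$i)) * (\<Sum>j\<in>UNIV. x$j * \<xi>$j)"
    by (simp add: alpha_star_sq_def sum_subtractf sum_product)
  then show ?thesis
    by (simp add: inner_vec_def k_def power2_eq_square right_diff_distrib mult.assoc
        flip: sum_distrib_left)
qed

lemma beta_star_eq: "beta_star x \<xi> = (1 - (norm x)\<^sup>2)^2 * (x \<bullet> \<xi>)"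
  by (simp add: beta_star_def berwald_b_def inner_vec_def sum_distrib_left mult.assoc)

definition berwald_dual_poly :: "real \<Rightarrow> real \<Rightarrow> real \<Rightarrow> real \<Rightarrow> real" where
  "berwald_dual_poly s A b B =
     16 * s * (1 - s)^2 * ((1 - s) * A + b^2) * B^4
     + 8 * ((10 * s - 1) * (1 - s) * A * b + (9 * s - 1) * b^3) * B^3
     + ((1 - 20 * s - 8 * s^2) * A^2 + 6 * (6 * s - 5) * A * b^2 - 27 * b^4) * B^2
     + 12 * A^2 * b * B - A^3"

lemma berwald_dual_poly_scale:
  "berwald_dual_poly s (u^2 * A) (u * b) (u * B) = u^6 * berwald_dual_poly s A b B"
  unfolding berwald_dual_poly_def by algebra

text \<open>\<open>X\<close> and \<open>Z\<close> are \<open>\<langle>x,H\<rangle>\<close> and \<open>|H|\<^sup>2\<close> for \<open>H = m y + n x\<close> with \<open>|y| = 1\<close>, \<open>\<langle>x,y\<rangle> = p\<close>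
  and \<open>|x|\<^sup>2 = 1 - c\<close>.\<close>
lemma berwald_dual_poly_root:
  fixes r p c m n X Z :: real
  assumes "c = r^2 - p^2" and "m = (r - p) * c" and "n = (r - p) * p + 2 * r^2"
    and "X = m * p + n * (1 - c)" and "Z = m^2 + 2 * m * n * p + n^2 * (1 - c)"
  shows "berwald_dual_poly (1 - c) (c^3 * (Z - X^2)) (c^2 * X) ((r - p) * c * r^3) = 0"
  unfolding berwald_dual_poly_def assms by algebra

lemma berwald_dual_poly_gradient_root:
  fixes x y \<xi> :: "real^'n" and c p r u :: real
  assumes "norm y = 1" and c: "c = 1 - (norm x)\<^sup>2" and p: "p = x \<bullet> y" and "c = r\<^sup>2 - p\<^sup>2"
    and \<xi>: "\<xi> = u *\<^sub>R (((r - p) * c) *\<^sub>R y + ((r - p) * p + 2 * r\<^sup>2) *\<^sub>R x)"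
  shows "berwald_dual_poly ((norm x)\<^sup>2) (alpha_star_sq x \<xi>) (beta_star x \<xi>)
    (u * ((r - p) * c * r^3)) = 0"
proof -
  define m n where "m = (r - p) * c" and "n = (r - p) * p + 2 * r\<^sup>2"
  define H where "H = m *\<^sub>R y + n *\<^sub>R x"
  have norms: "x \<bullet> x = 1 - c" "y \<bullet> y = 1"
    using assms(1) by (simp_all add: c flip: power2_norm_eq_inner)
  have "H \<bullet> H = m\<^sup>2 + 2 * m * n * p + n\<^sup>2 * (1 - c)" "x \<bullet> H = m * p + n * (1 - c)"
    by (simp_all add: norms H_def p inner_add_left inner_add_right inner_commute
        power2_eq_square algebra_simps)
  moreover have "\<xi> = u *\<^sub>R H"
    by (simp add: \<xi> H_def m_def n_def)
  ultimately have "alpha_star_sq x \<xi>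
      = u\<^sup>2 * (c^3 * ((m\<^sup>2 + 2 * m * n * p + n\<^sup>2 * (1 - c)) - (m * p + n * (1 - c))\<^sup>2))"
    and "beta_star x \<xi> = u * (c\<^sup>2 * (m * p + n * (1 - c)))"
    by (simp_all add: alpha_star_sq_eq beta_star_eq c algebra_simps power2_eq_square)
  then show ?thesis
    using berwald_dual_poly_root[OF \<open>c = r\<^sup>2 - p\<^sup>2\<close> m_def n_def refl refl]
    by (simp add: berwald_dual_poly_scale c)
qed

theorem lemma3p4:
  fixes x \<xi> :: "real^'n"
  assumes "x \<in> ball 0 1"
  defines "B \<equiv> co_metric berwald x \<xi>"
      and "A \<equiv> alpha_star_sq x \<xi>"
      and "b \<equiv> beta_star x \<xi>"
      and "s \<equiv> (norm x)\<^sup>2"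
  shows "16 * s * (1 - s)^2 * ((1 - s) * A + b^2) * B^4
       + 8 * ((10 * s - 1) * (1 - s) * A * b + (9 * s - 1) * b^3) * B^3
       + ((1 - 20 * s - 8 * s^2) * A^2 + 6 * (6 * s - 5) * A * b^2 - 27 * b^4) * B^2
       + 12 * A^2 * b * B - A^3 = 0"
proof -
  have nx: "norm x < 1"
    using assms(1) by simp
  obtain y0 where y0: "norm y0 = 1" and \<xi>: "\<xi> = B *\<^sub>R berwald_grad x y0"
    using co_metric_eq_scaled_gradient[of berwald x, OF berwald_pos[OF nx]
        berwald_pos_homogeneous berwald_has_derivative[OF nx]]
    unfolding B_def by metis
  define c p where "c = 1 - s" and "p = x \<bullet> y0"
  define r where "r = sqrt (c + p\<^sup>2)"
  have "y0 \<noteq> 0"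
    using y0 by auto
  have "r > \<bar>p\<bar>"
    using berwald_radical_gt_abs_inner[OF nx \<open>y0 \<noteq> 0\<close>] y0
    by (simp add: r_def c_def s_def p_def)
  moreover have "c > 0"
    using nx by (simp add: c_def s_def abs_square_less_1)
  ultimately have den: "(r - p) * c * r^3 \<noteq> 0" and "c = r\<^sup>2 - p\<^sup>2"
    by (auto simp: r_def)
  with \<xi> have "\<xi> = (B / ((r - p) * c * r^3)) *\<^sub>R
      (((r - p) * c) *\<^sub>R y0 + ((r - p) * p + 2 * r\<^sup>2) *\<^sub>R x)"
    using berwald_grad_unit[OF nx y0 _ p_def r_def] by (simp add: c_def s_def divide_inverse)
  from berwald_dual_poly_gradient_root[OF y0 _ p_def \<open>c = r\<^sup>2 - p\<^sup>2\<close> this]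
  have "berwald_dual_poly s A b B = 0"
    using den by (simp add: A_def b_def c_def s_def)
  then show ?thesis
    by (simp add: berwald_dual_poly_def)
qed

end
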